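(* There exists a compact set $K\subset\mathbb{R}^2$ with positive two-dimensional Lebesgue measure such that $K+S^1$ has empty interior.
   Context: $S^1$ is the Euclidean unit circle in $\mathbb{R}^2$; $X+Y=\{x+y:x\in X,y\in Y\}$. *)

theory Defs
  imports "HOL-Analysis.Analysis"
begin

definition minkowski_sum :: "'a::plus set \<Rightarrow> 'a set \<Rightarrow> 'a set" where
  "minkowski_sum X Y = {x + y | x y. x \<in> X \<and> y \<in> Y}"

end

theory Submission
  imports Defs
begin

text \<open>Fix a countable dense set \<open>D\<close> of centres. The circles of radius 1 about the points of \<open>D\<close>
form a null set, so a compact \<open>K\<close> of positive measure can be chosen disjoint from all of them
by inner regularity. Then no point of \<open>D\<close> lies in \<open>K + S\<^sup>1\<close>, so this set misses a dense set and
has empty interior.\<close>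

lemma countable_dense_subset_exists:
  obtains D :: "'a::second_countable_topology set" where "countable D" "closure D = UNIV"
proof -
  obtain D :: "'a set" where "countable D" and D: "\<And>X. open X \<Longrightarrow> X \<noteq> {} \<Longrightarrow> \<exists>d\<in>D. d \<in> X"
    using countable_dense_setE by blast
  moreover have "closure D = UNIV"
    using D[of "- closure D"] closure_subset by blast
  ultimately show thesis using that by blast
qed

lemma interior_eq_empty_if_disjoint_dense:
  assumes "closure D = UNIV" "D \<inter> A = {}"
  shows "interior A = {}"
  using open_Int_closure_eq_empty[of "interior A" D] interior_subset[of A] assms by auto

lemma minkowski_sum_sphere_disjoint:
  fixes K :: "'a::real_normed_vector set"
  assumes "K \<inter> (\<Union>d\<in>D. sphere d r) = {}"
  shows "D \<inter> minkowski_sum K (sphere 0 r) = {}"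
proof -
  have "x + y \<notin> D" if "x \<in> K" "y \<in> sphere 0 r" for x y
  proof -
    have "x \<in> sphere (x + y) r"
      using that by (simp add: dist_norm)
    then show ?thesis
      using that assms by blast
  qed
  then show ?thesis
    unfolding minkowski_sum_def by blast
qed

lemma negligible_countable_Union_spheres:
  fixes D :: "'a::euclidean_space set"
  assumes "countable D"
  shows "negligible (\<Union>d\<in>D. sphere d r)"
  using assms by (auto intro!: negligible_countable_Union negligible_sphere)

lemma compact_subset_positive_measure:
  fixes S :: "'a::euclidean_space set"
  assumes "S \<in> lmeasurable" "bounded S" "measure lebesgue S > 0"
  obtains K where "compact K" "K \<subseteq> S" "measure lebesgue K > 0"
proof -
  obtain K where K: "closed K" "K \<subseteq> S" "S - K \<in> lmeasurable"
      "emeasure lebesgue (S - K) < ennreal (measure lebesgue S)"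
    using sets_lebesgue_inner_closed[of S "measure lebesgue S"] assms by auto
  have "compact K"
    using K(1,2) assms(2) bounded_subset compact_eq_bounded_closed by blast
  have "measure lebesgue (S - K) < measure lebesgue S"
    using K(3,4) by (simp add: emeasure_eq_measure2 ennreal_less_iff)
  moreover have "measure lebesgue (S - K) = measure lebesgue S - measure lebesgue K"
    using K(2) \<open>compact K\<close> assms(1) by (simp add: lmeasurable_compact measurable_measure_Diff fmeasurableD)
  ultimately show thesis
    using that \<open>compact K\<close> K(2) by simp
qed

lemma emeasure_lborel_compact:
  fixes K :: "'a::euclidean_space set"
  assumes "compact K"
  shows "emeasure lborel K = ennreal (measure lebesgue K)"
proof -
  have "emeasure lborel K = emeasure lebesgue K"
    using assms by (simp add: compact_imp_closed borel_closed)
  then show ?thesis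
    using assms by (simp add: emeasure_eq_measure2 lmeasurable_compact)
qed

lemma measure_unit_cbox_minus_negligible:
  assumes "negligible N"
  shows "measure lebesgue (cbox (0::real^'n) 1 - N) = 1"
  using assms by (simp add: measure_Diff_null_set negligible_iff_null_sets
      content_cbox_cart interval_ne_empty_cart)

theorem mainTheorem10:
  shows "\<exists>K :: (real^2) set. compact K \<and> emeasure lborel K > 0 \<and>
           interior (minkowski_sum K (sphere 0 1)) = {}"
proof -
  obtain D :: "(real^2) set" where "countable D" "closure D = UNIV"
    using countable_dense_subset_exists by blast
  define N where "N = (\<Union>d\<in>D. sphere d (1::real))"
  have "negligible N"
    unfolding N_def using \<open>countable D\<close> by (rule negligible_countable_Union_spheres)
  then have "measure lebesgue (cbox 0 1 - N) = 1"
    by (rule measure_unit_cbox_minus_negligible)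
  moreover have "cbox 0 1 - N \<in> lmeasurable"
    using \<open>negligible N\<close> by (intro fmeasurable_Diff lmeasurable_cbox negligible_imp_sets)
  moreover have "bounded (cbox (0::real^2) 1 - N)"
    by (meson Diff_subset bounded_cbox bounded_subset)
  ultimately obtain K where K: "compact K" "K \<subseteq> cbox 0 1 - N" "measure lebesgue K > 0"
    using compact_subset_positive_measure[of "cbox 0 1 - N"] by auto
  have "D \<inter> minkowski_sum K (sphere 0 1) = {}"
    using K(2) unfolding N_def by (intro minkowski_sum_sphere_disjoint) blast
  with \<open>closure D = UNIV\<close> have "interior (minkowski_sum K (sphere 0 1)) = {}"
    by (rule interior_eq_empty_if_disjoint_dense)
  moreover have "emeasure lborel K > 0"
    using K(1,3) by (simp add: emeasure_lborel_compact)
  ultimately show ?thesis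
    using K(1) by blast
qed

end
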